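(* Let $\mathbb{K}$ be a field and $f=a_0(x)+a_1(x)y+\cdots+a_n(x)y^n\in\mathbb{K}[x,y]$ with $n\geq 2$, $a_0,\ldots,a_n\in\mathbb{K}[x]$, $a_0a_n\neq 0$. Assume that $f$ has no nonconstant factor in $\mathbb{K}[x]$, and let $\nu_0$ and $\nu_n$ be the number of irreducible factors of $a_0(x)$ and $a_n(x)$ in $\mathbb{K}[x]$, respectively, counted with their multiplicities. Then $f$ is a product of at most $\nu=\min\{\nu_0,\nu_n\}$ irreducible polynomials over $\mathbb{K}[x]$ in each of the following two cases: (i) $a_0$ is reducible over $\mathbb{K}$, $\deg a_n\geq\deg a_0-\deg q$ where $q\in\mathbb{K}[x]$ is an irreducible factor of $a_0$ of smallest degree, and $\deg a_0>\max\{\deg a_1,\dots,\deg a_n\}$; (ii) $a_n$ is reducible over $\mathbb{K}$, $\deg a_0\geq\deg a_n-\deg q$ where $q\in\mathbb{K}[x]$ is an irreducible factor of $a_n$ of smallest degree, and $\deg a_n>\max\{\deg a_0,\dots,\deg a_{n-1}\}$.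
   Context: $f$ is regarded as a polynomial in $y$ with coefficients in $\mathbb{K}[x]$; "a product of at most $k$ irreducible polynomials over $\mathbb{K}[x]$" means that in the factorization of $f$ into irreducible elements of $\mathbb{K}[x][y]$ the number of factors, counted with multiplicities, is at most $k$. *)

theory Defs
  imports "HOL-Computational_Algebra.Computational_Algebra"
begin

text \<open>Bivariate polynomials K[x,y] are modelled as polynomials in y with coefficients
in K[x], i.e. type 'a poly poly; coeff f i is a_i(x).\<close>

definition irr_factorization_of :: "'a::algebraic_semidom \<Rightarrow> 'a list \<Rightarrow> bool" where
  "irr_factorization_of p gs \<longleftrightarrow>
     (\<forall>g\<in>set gs. irreducible g) \<and> (\<exists>u. is_unit u \<and> p = u * prod_list gs)"

definition num_irr_factors :: "'a::algebraic_semidom \<Rightarrow> nat" where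
  "num_irr_factors p = (LEAST k. \<exists>gs. length gs = k \<and> irr_factorization_of p gs)"

definition product_of_at_most_irr :: "nat \<Rightarrow> 'a::algebraic_semidom \<Rightarrow> bool" where
  "product_of_at_most_irr k p \<longleftrightarrow>
     (\<exists>gs. length gs \<le> k \<and> (\<forall>g\<in>set gs. irreducible g) \<and> p = prod_list gs)"

definition reducible :: "'a::algebraic_semidom \<Rightarrow> bool" where
  "reducible p \<longleftrightarrow> p \<noteq> 0 \<and> \<not> is_unit p \<and> \<not> irreducible p"

end

theory Submission
  imports Defs
begin

text \<open>Factor \<open>f = g\<^sub>1 \<cdots> g\<^sub>k\<close> into irreducibles of \<open>K[x][y]\<close>; having no content, every \<open>g\<^sub>j\<close>
  has positive degree in \<open>y\<close>, and \<open>a\<^sub>0\<close>, \<open>a\<^sub>n\<close> are (up to a unit) the products of the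
  constant resp. leading coefficients of the \<open>g\<^sub>j\<close>. The coefficient of the top power of \<open>x\<close>,
  read as a polynomial in \<open>y\<close>, is multiplicative. In case (i) it is constant for \<open>f\<close>,
  hence for every \<open>g\<^sub>j\<close>, which forces \<open>deg g\<^sub>j(0) > deg lc(g\<^sub>j)\<close>; so every \<open>g\<^sub>j(0)\<close> is
  nonconstant and \<open>k \<le> \<nu>\<^sub>0\<close>. If moreover every \<open>lc(g\<^sub>j)\<close> is nonconstant then \<open>k \<le> \<nu>\<^sub>n\<close>;
  otherwise summing degrees gives \<open>deg a\<^sub>0 \<ge> deg a\<^sub>n + deg q + (k - 1)\<close>, and the hypothesis
  on \<open>deg a\<^sub>n\<close> leaves only \<open>k = 1 \<le> \<nu>\<^sub>n\<close>. Case (ii) is symmetric, the top \<open>x\<close>-coefficient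
  of \<open>f\<close> now being a monomial \<open>c y\<^sup>n\<close>.\<close>

section \<open>Factorizations into irreducibles\<close>

lemma irr_factorization_of_unit_mult:
  assumes "irr_factorization_of p gs" "is_unit u"
  shows "irr_factorization_of (u * p) gs"
proof -
  from assms(1) obtain v where "is_unit v" "p = v * prod_list gs" "\<forall>g\<in>set gs. irreducible g"
    unfolding irr_factorization_of_def by blast
  with assms(2) show ?thesis
    unfolding irr_factorization_of_def by (metis is_unit_mult_iff mult.assoc)
qed

lemma irr_factorization_of_mult:
  assumes "irr_factorization_of p gs" "irr_factorization_of q hs"
  shows "irr_factorization_of (p * q) (gs @ hs)"
proof -
  from assms obtain u v where "is_unit u" "p = u * prod_list gs" "is_unit v" "q = v * prod_list hs"
    unfolding irr_factorization_of_def by blast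
  then have "is_unit (u * v)" "p * q = (u * v) * prod_list (gs @ hs)"
    by (simp_all add: is_unit_mult_iff mult_ac)
  with assms show ?thesis
    unfolding irr_factorization_of_def by auto
qed

text \<open>For an arbitrary field the library has no \<open>factorial_semiring\<close> instance of \<open>K[x]\<close> or
  \<open>K[x][y]\<close>, so existence of factorizations is derived from a measure decreasing on proper
  factors, and invariance of their length from primality of the irreducibles of \<open>K[x]\<close>.\<close>

lemma irr_factorization_exists_by_measure:
  fixes m :: "'a::algebraic_semidom \<Rightarrow> nat" and p :: 'a
  assumes m_less: "\<And>a b. a * b \<noteq> 0 \<Longrightarrow> \<not> is_unit b \<Longrightarrow> m a < m (a * b)"
    and "p \<noteq> 0"
  shows "\<exists>gs. irr_factorization_of p gs"
  using assms(2)
proof (induction p rule: measure_induct_rule[of m])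
  case (less p)
  consider "is_unit p" | "irreducible p" | a b where "p = a * b" "\<not> is_unit a" "\<not> is_unit b"
    using less.prems unfolding irreducible_def by blast
  then show ?case
  proof cases
    case 1
    then have "irr_factorization_of p []"
      unfolding irr_factorization_of_def by simp
    then show ?thesis ..
  next
    case 2
    then have "irr_factorization_of p [p]"
      unfolding irr_factorization_of_def by (auto intro!: exI[of _ 1])
    then show ?thesis ..
  next
    case 3
    then have "m a < m p" "m b < m p" "a \<noteq> 0" "b \<noteq> 0"
      using m_less[of a b] m_less[of b a] less.prems by (auto simp: mult.commute)
    with less.IH obtain gs hs where "irr_factorization_of a gs" "irr_factorization_of b hs"
      by blast
    then have "irr_factorization_of p (gs @ hs)"
      unfolding \<open>p = a * b\<close> by (rule irr_factorization_of_mult)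
    then show ?thesis ..
  qed
qed

lemma prod_list_remove1:
  fixes xs :: "'a::comm_monoid_mult list"
  assumes "x \<in> set xs"
  shows "prod_list xs = x * prod_list (remove1 x xs)"
  using assms by (induction xs) (auto simp: mult_ac)

lemma prime_irreducible_factorizations_length_eq:
  fixes gs hs :: "'a::algebraic_semidom list"
  assumes "\<forall>g\<in>set gs. prime_elem g" "\<forall>h\<in>set hs. irreducible h"
    and "is_unit u" "is_unit v" "u * prod_list gs = v * prod_list hs"
  shows "length gs = length hs"
  using assms
proof (induction gs arbitrary: hs u v)
  case Nil
  then have "is_unit (prod_list hs)"
    by (metis is_unit_mult_iff mult.right_neutral prod_list.Nil)
  then have "hs = []"
    using Nil.prems(2) by (cases hs) (auto simp: is_unit_mult_iff dest: irreducible_not_unit)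
  then show ?case by simp
next
  case (Cons g gs)
  have g: "prime_elem g" using Cons.prems(1) by simp
  have "g dvd v * prod_list hs"
    using Cons.prems(5) by (metis dvd_mult dvd_triv_left prod_list.Cons)
  then have "g dvd prod_mset (mset hs)"
    using g Cons.prems(4) prime_elem_dvd_mult_iff prime_elem_not_unit
    by (metis dvd_unit_imp_unit prod_mset_prod_list)
  then obtain h where h: "h \<in> set hs" "g dvd h"
    using g by (auto elim: prime_elem_dvd_prod_msetE)
  then obtain w where w: "h = g * w" by (elim dvdE)
  have "is_unit w"
    using Cons.prems(2) h(1) g w by (metis irreducibleD prime_elem_not_unit)
  have "g * (u * prod_list gs) = g * ((v * w) * prod_list (remove1 h hs))"
    using Cons.prems(5) prod_list_remove1[OF h(1)] w by (simp add: mult_ac)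
  then have "u * prod_list gs = (v * w) * prod_list (remove1 h hs)"
    using g by (simp add: prime_elem_def)
  moreover have "\<forall>h'\<in>set (remove1 h hs). irreducible h'"
    using Cons.prems(2) by (meson notin_set_remove1)
  ultimately have "length gs = length (remove1 h hs)"
    using Cons.IH[of "remove1 h hs" u "v * w"] Cons.prems(1,3,4) \<open>is_unit w\<close>
    by (simp add: is_unit_mult_iff)
  then show ?case
    using h(1) length_pos_if_in_set[of h hs] by (simp add: length_remove1)
qed

lemma num_irr_factors_eq_length:
  fixes p :: "'a::algebraic_semidom"
  assumes irreducible_prime: "\<And>g::'a. irreducible g \<Longrightarrow> prime_elem g"
    and gs: "irr_factorization_of p gs"
  shows "num_irr_factors p = length gs"
  unfolding num_irr_factors_def
proof (rule Least_equality)
  show "\<exists>hs. length hs = length gs \<and> irr_factorization_of p hs"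
    using gs by blast
next
  fix k
  assume "\<exists>hs. length hs = k \<and> irr_factorization_of p hs"
  then obtain hs where hs: "length hs = k" "irr_factorization_of p hs"
    by blast
  from gs hs(2) obtain u v where
    "is_unit u" "p = u * prod_list gs" "\<forall>g\<in>set gs. irreducible g"
    "is_unit v" "p = v * prod_list hs" "\<forall>h\<in>set hs. prime_elem h"
    unfolding irr_factorization_of_def using irreducible_prime by blast
  then have "length hs = length gs"
    by (intro prime_irreducible_factorizations_length_eq[of hs gs v u]) simp_all
  with hs(1) show "length gs \<le> k"
    by simp
qed

lemma field_poly_irr_factorization_exists:
  fixes p :: "'a::field poly"
  assumes "p \<noteq> 0"
  shows "\<exists>gs. irr_factorization_of p gs"
  by (rule irr_factorization_exists_by_measure[of degree, OF _ assms])
    (auto simp: degree_mult_eq is_unit_iff_degree)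

lemma field_poly_num_irr_factors_eq_length:
  fixes p :: "'a::field poly"
  shows "irr_factorization_of p gs \<Longrightarrow> num_irr_factors p = length gs"
  by (rule num_irr_factors_eq_length[OF field_poly_irreducible_imp_prime])

lemma length_le_num_irr_factors:
  fixes bs :: "'a::field poly list"
  assumes p: "p = u * prod_list bs" "is_unit u" and nonconst: "\<forall>b\<in>set bs. degree b > 0"
  shows "length bs \<le> num_irr_factors p"
proof -
  have "\<exists>gs. irr_factorization_of (prod_list bs) gs \<and> length bs \<le> length gs"
    using nonconst
  proof (induction bs)
    case Nil
    have "irr_factorization_of (prod_list []) []"
      unfolding irr_factorization_of_def by simp
    then show ?case by blast
  next
    case (Cons b bs)
    then have "b \<noteq> 0"
      by auto
    with Cons.prems have "\<not> is_unit b"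
      by (simp add: is_unit_iff_degree)
    obtain gb where gb: "irr_factorization_of b gb"
      using field_poly_irr_factorization_exists[OF \<open>b \<noteq> 0\<close>] by blast
    with \<open>\<not> is_unit b\<close> have "length gb \<ge> 1"
      unfolding irr_factorization_of_def by (cases gb) auto
    from Cons obtain gs where "irr_factorization_of (prod_list bs) gs" "length bs \<le> length gs"
      by (meson list.set_intros(2))
    moreover from gb this(1) have "irr_factorization_of (prod_list (b # bs)) (gb @ gs)"
      unfolding prod_list.Cons by (rule irr_factorization_of_mult)
    ultimately show ?case
      using \<open>length gb \<ge> 1\<close> by (intro exI[of _ "gb @ gs"]) simp
  qed
  then obtain gs where "irr_factorization_of (prod_list bs) gs" "length bs \<le> length gs"
    by blast
  with p have "irr_factorization_of p gs" "length bs \<le> length gs"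
    by (simp_all add: irr_factorization_of_unit_mult)
  then show ?thesis
    by (simp add: field_poly_num_irr_factors_eq_length)
qed

lemma poly_poly_irr_factorization_exists:
  fixes f :: "'a::field poly poly"
  assumes "f \<noteq> 0"
  shows "\<exists>gs. irr_factorization_of f gs"
proof (rule irr_factorization_exists_by_measure[OF _ assms])
  fix a b :: "'a poly poly"
  assume ab: "a * b \<noteq> 0" "\<not> is_unit b"
  have "degree b + degree (lead_coeff b) \<noteq> 0"
  proof
    assume "degree b + degree (lead_coeff b) = 0"
    moreover have "lead_coeff b \<noteq> 0"
      using ab(1) by auto
    ultimately have "b = [:lead_coeff b:]" "is_unit (lead_coeff b)"
      by (auto simp: degree_0_id is_unit_iff_degree)
    with ab(2) show False
      by (metis is_unit_const_poly_iff)
  qed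
  moreover from ab(1) have "a \<noteq> 0" "b \<noteq> 0"
    by auto
  then have "degree (a * b) = degree a + degree b"
    "degree (lead_coeff (a * b)) = degree (lead_coeff a) + degree (lead_coeff b)"
    unfolding lead_coeff_mult by (simp_all add: degree_mult_eq)
  ultimately show "degree a + degree (lead_coeff a)
      < degree (a * b) + degree (lead_coeff (a * b))"
    by simp
qed

lemma product_of_at_most_irr_if_irr_factorization:
  assumes "irr_factorization_of p gs" "\<not> is_unit p" "length gs \<le> k"
  shows "product_of_at_most_irr k p"
proof -
  from assms(1) obtain u where u: "is_unit u" "p = u * prod_list gs" "\<forall>g\<in>set gs. irreducible g"
    unfolding irr_factorization_of_def by blast
  with assms(2) obtain g gs' where gs: "gs = g # gs'"
    by (cases gs) auto
  have "p = prod_list ((u * g) # gs')" "\<forall>h\<in>set ((u * g) # gs'). irreducible h"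
    using u by (auto simp: gs mult.assoc irreducible_mult_unit_left)
  with assms(3) show ?thesis
    unfolding product_of_at_most_irr_def gs by (intro exI[of _ "(u * g) # gs'"]) simp
qed

lemma lead_coeff_prod_list:
  fixes ps :: "'a::idom poly list"
  shows "lead_coeff (prod_list ps) = prod_list (map lead_coeff ps)"
  by (induction ps) (auto simp: lead_coeff_mult)

lemma coeff_0_lead_coeff_if_irr_factorization:
  fixes f :: "'a::field poly poly"
  assumes "irr_factorization_of f gs"
  obtains c where "is_unit c" "coeff f 0 = c * prod_list (map (\<lambda>g. coeff g 0) gs)"
    "lead_coeff f = c * prod_list (map lead_coeff gs)"
proof -
  from assms obtain u where u: "is_unit u" "f = u * prod_list gs"
    unfolding irr_factorization_of_def by blast
  then obtain c where "u = [:c:]" "is_unit c"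
    using is_unit_poly_iff by blast
  with u that show ?thesis
    by (simp add: coeff_mult_0 coeff_0_prod_list lead_coeff_mult lead_coeff_prod_list)
qed

lemma degree_irreducible_dvd_no_constant_factor:
  fixes f g :: "'a::field poly poly"
  assumes "irreducible g" "g dvd f" "\<forall>c. [:c:] dvd f \<longrightarrow> degree c = 0"
  shows "degree g \<noteq> 0"
proof
  assume "degree g = 0"
  then have g: "g = [:coeff g 0:]"
    by (rule degree_0_id[symmetric])
  with assms(2,3) have "degree (coeff g 0) = 0"
    by metis
  moreover have "g \<noteq> 0"
    using assms(1) by (simp add: irreducible_def)
  then have "coeff g 0 \<noteq> 0"
    using g by (metis pCons_0_0)
  ultimately have "is_unit g"
    using g by (metis is_unit_const_poly_iff is_unit_iff_degree)
  with assms(1) show False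
    by (simp add: irreducible_not_unit)
qed

section \<open>The coefficient of the top power of \<open>x\<close>\<close>

definition degree_x :: "'a::zero poly poly \<Rightarrow> nat" where
  "degree_x p = Max ((\<lambda>i. degree (coeff p i)) ` {..degree p})"

text \<open>The coefficient of \<open>x ^ degree_x p\<close> in \<open>p\<close>, a polynomial in \<open>y\<close>: the leading
  coefficient of \<open>p\<close> read as a polynomial in \<open>x\<close> over \<open>K[y]\<close>.\<close>
definition lead_coeff_x :: "'a::zero poly poly \<Rightarrow> 'a poly" where
  "lead_coeff_x p = Poly (map (\<lambda>i. coeff (coeff p i) (degree_x p)) [0..<Suc (degree p)])"

lemma degree_coeff_le_degree_x: "degree (coeff p i) \<le> degree_x p"
proof (cases "i \<le> degree p")
  case True
  then show ?thesis
    unfolding degree_x_def by (intro Max_ge) auto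
next
  case False
  then show ?thesis
    by (simp add: coeff_eq_0)
qed

lemma degree_x_le: "(\<And>i. degree (coeff p i) \<le> m) \<Longrightarrow> degree_x p \<le> m"
  unfolding degree_x_def by (intro Max.boundedI) auto

lemma degree_x_eqI: "(\<And>i. degree (coeff p i) \<le> degree (coeff p j)) \<Longrightarrow> degree_x p = degree (coeff p j)"
  by (meson antisym degree_coeff_le_degree_x degree_x_le)

lemma coeff_lead_coeff_x: "coeff (lead_coeff_x p) i = coeff (coeff p i) (degree_x p)"
  unfolding lead_coeff_x_def
  by (cases "i \<le> degree p") (auto simp: nth_default_def coeff_eq_0 simp del: upt_Suc)

lemma degree_lead_coeff_x_le: "degree (lead_coeff_x p) \<le> degree p"
  by (rule degree_le) (simp add: coeff_lead_coeff_x coeff_eq_0)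

lemma lead_coeff_x_nonzero:
  assumes "p \<noteq> 0"
  shows "lead_coeff_x p \<noteq> 0"
proof -
  have "degree_x p \<in> (\<lambda>i. degree (coeff p i)) ` {..degree p}"
    unfolding degree_x_def by (intro Max_in) auto
  then obtain i where "degree (coeff p i) = degree_x p"
    by auto
  show ?thesis
  proof (cases "coeff p i = 0")
    case False
    then have "coeff (lead_coeff_x p) i \<noteq> 0"
      using \<open>degree (coeff p i) = degree_x p\<close> by (metis coeff_lead_coeff_x leading_coeff_0_iff)
    then show ?thesis
      by auto
  next
    case True
    then have "degree_x p = 0"
      using \<open>degree (coeff p i) = degree_x p\<close> by simp
    moreover have "degree (lead_coeff p) = 0"
      using degree_coeff_le_degree_x[of p "degree p"] \<open>degree_x p = 0\<close> by simp
    with assms have "coeff (lead_coeff p) 0 \<noteq> 0"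
      by (metis leading_coeff_0_iff leading_coeff_neq_0)
    ultimately have "coeff (lead_coeff_x p) (degree p) \<noteq> 0"
      by (simp add: coeff_lead_coeff_x)
    then show ?thesis
      by auto
  qed
qed

lemma coeff_mult_at_degree_bounds:
  fixes p q :: "'a::comm_semiring_1 poly"
  assumes "degree p \<le> m" "degree q \<le> n"
  shows "coeff (p * q) (m + n) = coeff p m * coeff q n"
proof (cases "degree p = m \<and> degree q = n")
  case True
  then show ?thesis
    using coeff_mult_degree_sum[of p q] by simp
next
  case False
  with assms have "degree (p * q) < m + n"
    using degree_mult_le[of p q] by linarith
  with False assms show ?thesis
    by (auto simp: coeff_eq_0)
qed

lemma coeff_coeff_mult_degree_x:
  fixes g h :: "'a::comm_semiring_1 poly poly"
  shows "coeff (coeff (g * h) k) (degree_x g + degree_x h) = coeff (lead_coeff_x g * lead_coeff_x h) k"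
proof -
  have "coeff (coeff (g * h) k) (degree_x g + degree_x h) =
      (\<Sum>i\<le>k. coeff (coeff g i * coeff h (k - i)) (degree_x g + degree_x h))"
    by (simp add: coeff_mult[of g h] coeff_sum)
  also have "\<dots> = (\<Sum>i\<le>k. coeff (coeff g i) (degree_x g) * coeff (coeff h (k - i)) (degree_x h))"
    by (intro sum.cong) (simp_all add: coeff_mult_at_degree_bounds degree_coeff_le_degree_x)
  also have "\<dots> = coeff (lead_coeff_x g * lead_coeff_x h) k"
    by (simp add: coeff_mult[of "lead_coeff_x g" "lead_coeff_x h"] coeff_lead_coeff_x)
  finally show ?thesis .
qed

lemma degree_x_mult:
  fixes g h :: "'a::idom poly poly"
  assumes "g \<noteq> 0" "h \<noteq> 0"
  shows "degree_x (g * h) = degree_x g + degree_x h"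
proof (rule antisym)
  show "degree_x (g * h) \<le> degree_x g + degree_x h"
    by (rule degree_x_le, unfold coeff_mult, rule degree_sum_le)
      (auto intro: order.trans[OF degree_mult_le] add_mono degree_coeff_le_degree_x)
  obtain k where "coeff (lead_coeff_x g * lead_coeff_x h) k \<noteq> 0"
    using assms lead_coeff_x_nonzero by (metis leading_coeff_0_iff mult_eq_0_iff)
  then have "degree_x g + degree_x h \<le> degree (coeff (g * h) k)"
    by (intro le_degree) (simp add: coeff_coeff_mult_degree_x)
  also have "\<dots> \<le> degree_x (g * h)"
    by (rule degree_coeff_le_degree_x)
  finally show "degree_x g + degree_x h \<le> degree_x (g * h)" .
qed

lemma lead_coeff_x_mult:
  fixes g h :: "'a::idom poly poly"
  assumes "g \<noteq> 0" "h \<noteq> 0"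
  shows "lead_coeff_x (g * h) = lead_coeff_x g * lead_coeff_x h"
  by (rule poly_eqI) (simp add: coeff_lead_coeff_x degree_x_mult[OF assms] coeff_coeff_mult_degree_x)

lemma degree_coeff_less_if_coeff_lead_coeff_x:
  assumes "coeff (lead_coeff_x g) i \<noteq> 0" "coeff (lead_coeff_x g) j = 0" "coeff g j \<noteq> 0"
  shows "degree (coeff g j) < degree (coeff g i)"
proof -
  have "degree_x g \<le> degree (coeff g i)"
    using assms(1) by (intro le_degree) (simp add: coeff_lead_coeff_x)
  moreover have "degree (coeff g j) \<noteq> degree_x g"
    using assms(2,3) by (metis coeff_lead_coeff_x leading_coeff_0_iff)
  then have "degree (coeff g j) < degree_x g"
    using degree_coeff_le_degree_x[of g j] by linarith
  ultimately show ?thesis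
    by linarith
qed

definition constant_coeff_dominant :: "'a::zero poly poly \<Rightarrow> bool" where
  "constant_coeff_dominant f \<longleftrightarrow> (\<forall>i\<in>{1..degree f}. degree (coeff f i) < degree (coeff f 0))"

definition lead_coeff_dominant :: "'a::zero poly poly \<Rightarrow> bool" where
  "lead_coeff_dominant f \<longleftrightarrow> (\<forall>i<degree f. degree (coeff f i) < degree (lead_coeff f))"

lemma degree_lead_coeff_x_eq_0_if_constant_coeff_dominant:
  assumes "constant_coeff_dominant f"
  shows "degree (lead_coeff_x f) = 0"
proof -
  have less: "degree (coeff f i) < degree (coeff f 0)" if "i > 0" "coeff f i \<noteq> 0" for i
    using assms that le_degree[of f i] unfolding constant_coeff_dominant_def by auto
  have dx: "degree_x f = degree (coeff f 0)"
  proof (rule degree_x_eqI)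
    fix i
    show "degree (coeff f i) \<le> degree (coeff f 0)"
      using less[of i] by (cases "i = 0"; cases "coeff f i = 0") auto
  qed
  have "coeff (lead_coeff_x f) i = 0" if "i > 0" for i
    using less[OF that] coeff_eq_0[of "coeff f i" "degree (coeff f 0)"]
    by (cases "coeff f i = 0") (simp_all add: coeff_lead_coeff_x dx)
  then have "degree (lead_coeff_x f) \<le> 0"
    by (intro degree_le) auto
  then show ?thesis
    by simp
qed

lemma lead_coeff_x_eq_monom_if_lead_coeff_dominant:
  assumes "lead_coeff_dominant f"
  shows "lead_coeff_x f = monom (lead_coeff (lead_coeff f)) (degree f)"
proof -
  have less: "degree (coeff f i) < degree (lead_coeff f)" if "i \<noteq> degree f" "coeff f i \<noteq> 0" for i
    using assms that le_degree[of f i] unfolding lead_coeff_dominant_def by auto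
  have dx: "degree_x f = degree (lead_coeff f)"
  proof (rule degree_x_eqI)
    fix i
    show "degree (coeff f i) \<le> degree (lead_coeff f)"
      using less[of i] by (cases "i = degree f"; cases "coeff f i = 0") auto
  qed
  show ?thesis
  proof (rule poly_eqI)
    fix i
    show "coeff (lead_coeff_x f) i = coeff (monom (lead_coeff (lead_coeff f)) (degree f)) i"
      using less[of i] coeff_eq_0[of "coeff f i" "degree (lead_coeff f)"]
      by (cases "i = degree f"; cases "coeff f i = 0") (simp_all add: coeff_lead_coeff_x dx)
  qed
qed

lemma order_0_eq_degree_if_mult_eq_monom:
  fixes p q :: "'a::idom poly"
  assumes "p * q = monom c n" "c \<noteq> 0"
  shows "order 0 p = degree p"
proof -
  have "p \<noteq> 0" "q \<noteq> 0"
    using assms by auto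
  then have "order 0 p + order 0 q = degree p + degree q"
    using assms order_mult[of p q 0] degree_mult_eq[of p q] by (simp add: degree_monom_eq)
  then show ?thesis
    using order_degree[OF \<open>p \<noteq> 0\<close>, of 0] order_degree[OF \<open>q \<noteq> 0\<close>, of 0] by linarith
qed

lemma degree_lead_coeff_less_if_dvd_constant_coeff_dominant:
  fixes f g :: "'a::idom poly poly"
  assumes "constant_coeff_dominant f" "g dvd f" "f \<noteq> 0" "degree g \<noteq> 0"
  shows "degree (lead_coeff g) < degree (coeff g 0)"
proof -
  obtain h where f: "f = g * h"
    using assms(2) by (elim dvdE)
  with assms(3) have "g \<noteq> 0" "h \<noteq> 0"
    by auto
  then have "degree (lead_coeff_x g) + degree (lead_coeff_x h) = 0"
    using degree_lead_coeff_x_eq_0_if_constant_coeff_dominant[OF assms(1)]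
    by (simp add: f lead_coeff_x_mult degree_mult_eq lead_coeff_x_nonzero)
  then have "degree (lead_coeff_x g) = 0"
    by simp
  then have "coeff (lead_coeff_x g) 0 \<noteq> 0" "coeff (lead_coeff_x g) (degree g) = 0"
    using assms(4) lead_coeff_x_nonzero[OF \<open>g \<noteq> 0\<close>]
    by (metis leading_coeff_0_iff, simp add: coeff_eq_0)
  with \<open>g \<noteq> 0\<close> show ?thesis
    by (intro degree_coeff_less_if_coeff_lead_coeff_x) auto
qed

lemma degree_coeff_0_less_if_dvd_lead_coeff_dominant:
  fixes f g :: "'a::idom poly poly"
  assumes "lead_coeff_dominant f" "g dvd f" "f \<noteq> 0" "degree g \<noteq> 0" "coeff g 0 \<noteq> 0"
  shows "degree (coeff g 0) < degree (lead_coeff g)"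
proof -
  obtain h where f: "f = g * h"
    using assms(2) by (elim dvdE)
  with assms(3) have "g \<noteq> 0" "h \<noteq> 0"
    by auto
  have monom: "lead_coeff_x g * lead_coeff_x h = monom (lead_coeff (lead_coeff f)) (degree f)"
    using lead_coeff_x_eq_monom_if_lead_coeff_dominant[OF assms(1)]
    by (simp add: f lead_coeff_x_mult[OF \<open>g \<noteq> 0\<close> \<open>h \<noteq> 0\<close>])
  have "lead_coeff (lead_coeff f) \<noteq> 0"
    using assms(3) by simp
  then have order: "order 0 (lead_coeff_x g) = degree (lead_coeff_x g)"
    using monom order_0_eq_degree_if_mult_eq_monom by blast
  have "degree (lead_coeff_x g) + degree (lead_coeff_x h) = degree g + degree h"
    using monom \<open>lead_coeff (lead_coeff f) \<noteq> 0\<close> \<open>g \<noteq> 0\<close> \<open>h \<noteq> 0\<close>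
    by (metis degree_monom_eq degree_mult_eq f lead_coeff_x_nonzero)
  then have "degree (lead_coeff_x g) = degree g"
    using degree_lead_coeff_x_le[of g] degree_lead_coeff_x_le[of h] by linarith
  with order assms(4) lead_coeff_x_nonzero[OF \<open>g \<noteq> 0\<close>]
  have "coeff (lead_coeff_x g) (degree g) \<noteq> 0" "coeff (lead_coeff_x g) 0 = 0"
    by (metis leading_coeff_0_iff, simp add: poly_0_coeff_0[symmetric] order_root)
  with assms(5) show ?thesis
    by (intro degree_coeff_less_if_coeff_lead_coeff_x)
qed

section \<open>Counting the factors\<close>

lemma field_poly_irreducible_factor_exists:
  fixes p :: "'a::field poly"
  assumes "p \<noteq> 0" "\<not> is_unit p"
  obtains r where "irreducible r" "r dvd p"
proof -
  obtain gs u where "is_unit u" "p = u * prod_list gs" "\<forall>g\<in>set gs. irreducible g"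
    using field_poly_irr_factorization_exists[OF assms(1)] unfolding irr_factorization_of_def by blast
  moreover from this assms(2) obtain g gs' where "gs = g # gs'"
    by (cases gs) auto
  ultimately show ?thesis
    using that by auto
qed

lemma degree_less_if_reducible:
  fixes p q :: "'a::field poly"
  assumes "reducible p" "irreducible q" "q dvd p"
  shows "degree q < degree p"
proof -
  obtain r where r: "p = q * r"
    using assms(3) by (elim dvdE)
  with assms(1) have "q \<noteq> 0" "r \<noteq> 0"
    unfolding reducible_def by auto
  moreover have "\<not> is_unit r"
    using assms(1,2) r irreducible_mult_unit_left[of r q] unfolding reducible_def
    by (auto simp: mult.commute)
  ultimately show ?thesis
    using r by (simp add: degree_mult_eq is_unit_iff_degree)
qed

lemma degree_unit_mult_prod_list:
  fixes ps :: "'a::field poly list"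
  assumes "is_unit c" "0 \<notin> set ps"
  shows "degree (c * prod_list ps) = sum_list (map degree ps)"
proof -
  have "degree (prod_list ps) = sum_list (map degree ps)"
    using assms(2) by (induction ps) (auto simp: degree_mult_eq prod_list_zero_iff)
  moreover have "c \<noteq> 0" "prod_list ps \<noteq> 0"
    using assms by (auto simp: prod_list_zero_iff)
  ultimately show ?thesis
    using assms(1) by (simp add: degree_mult_eq is_unit_iff_degree)
qed

lemma sum_list_map_less_gap:
  fixes e b :: "'b \<Rightarrow> nat"
  assumes "\<forall>y\<in>set xs. e y < b y" "x \<in> set xs"
  shows "sum_list (map e xs) + b x + (length xs - 1) \<le> sum_list (map b xs) + e x"
proof -
  define ys where "ys = remove1 x xs"
  have "sum_list (map (\<lambda>y. Suc (e y)) ys) \<le> sum_list (map b ys)"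
    using assms(1) unfolding ys_def by (intro sum_list_mono) (meson Suc_leI in_mono set_remove1_subset)
  moreover have "sum_list (map (\<lambda>y. Suc (e y)) ys) = sum_list (map e ys) + length ys"
    by (induction ys) auto
  moreover have "length ys = length xs - 1"
    using assms(2) unfolding ys_def by (simp add: length_remove1)
  ultimately show ?thesis
    using assms(2) sum_list_map_remove1[of x xs e] sum_list_map_remove1[of x xs b]
    unfolding ys_def by linarith
qed

definition degree_drop_le_least_factor :: "'a::field poly \<Rightarrow> 'a poly \<Rightarrow> bool" where
  "degree_drop_le_least_factor A Z \<longleftrightarrow> reducible A \<and>
     (\<exists>q. irreducible q \<and> q dvd A \<and> (\<forall>r. irreducible r \<and> r dvd A \<longrightarrow> degree q \<le> degree r) \<and>
          int (degree Z) \<ge> int (degree A) - int (degree q))"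

lemma degree_le_if_least_irreducible_factor:
  fixes A b q :: "'a::field poly"
  assumes "\<forall>r. irreducible r \<and> r dvd A \<longrightarrow> degree q \<le> degree r" "b dvd A" "degree b > 0"
  shows "degree q \<le> degree b"
proof -
  have "b \<noteq> 0"
    using assms(3) by auto
  with assms(3) have "\<not> is_unit b"
    by (simp add: is_unit_iff_degree)
  with \<open>b \<noteq> 0\<close> obtain r where "irreducible r" "r dvd b"
    by (rule field_poly_irreducible_factor_exists)
  with assms(1,2) \<open>b \<noteq> 0\<close> show ?thesis
    by (meson dvd_imp_degree_le dvd_trans order_trans)
qed

lemma degree_pos_if_degree_drop:
  assumes "degree_drop_le_least_factor A Z"
  shows "degree Z > 0"
proof -
  from assms obtain q where "reducible A" "irreducible q" "q dvd A"
    "int (degree Z) \<ge> int (degree A) - int (degree q)"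
    unfolding degree_drop_le_least_factor_def by blast
  then show ?thesis
    using degree_less_if_reducible[of A q] by linarith
qed

lemma length_le_one_if_degree_drop:
  fixes \<beta> \<epsilon> :: "'b \<Rightarrow> 'a::field poly"
  assumes drop: "degree_drop_le_least_factor A Z"
    and A: "A = c * prod_list (map \<beta> gs)" "is_unit c"
    and Z: "Z = d * prod_list (map \<epsilon> gs)" "is_unit d"
    and less: "\<forall>g\<in>set gs. \<epsilon> g \<noteq> 0 \<and> degree (\<epsilon> g) < degree (\<beta> g)"
    and g: "g \<in> set gs" "degree (\<epsilon> g) = 0"
  shows "length gs \<le> 1"
proof -
  from drop obtain q where red: "reducible A" and q: "irreducible q" "q dvd A"
    "\<forall>r. irreducible r \<and> r dvd A \<longrightarrow> degree q \<le> degree r"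
    "int (degree Z) \<ge> int (degree A) - int (degree q)"
    unfolding degree_drop_le_least_factor_def by blast
  from red have "A \<noteq> 0"
    unfolding reducible_def by simp
  have "\<beta> g dvd A"
    using A g(1) by (simp add: prod_list_dvd)
  moreover have "degree (\<beta> g) > 0"
    using less g by fastforce
  ultimately have "degree q \<le> degree (\<beta> g)"
    by (rule degree_le_if_least_irreducible_factor[OF q(3)])
  moreover have "degree A = sum_list (map (degree \<circ> \<beta>) gs)"
    using A \<open>A \<noteq> 0\<close> by (simp add: degree_unit_mult_prod_list prod_list_zero_iff)
  moreover have "degree Z = sum_list (map (degree \<circ> \<epsilon>) gs)"
    using Z less degree_unit_mult_prod_list[of d "map \<epsilon> gs"] by force
  moreover have "sum_list (map (degree \<circ> \<epsilon>) gs) + degree (\<beta> g) + (length gs - 1)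
      \<le> sum_list (map (degree \<circ> \<beta>) gs)"
    using sum_list_map_less_gap[of gs "degree \<circ> \<epsilon>" "degree \<circ> \<beta>" g] less g by auto
  ultimately show ?thesis
    using q(4) by linarith
qed

lemma length_le_num_irr_factors_if_degree_drop:
  fixes \<beta> \<epsilon> :: "'b \<Rightarrow> 'a::field poly"
  assumes drop: "degree_drop_le_least_factor A Z"
    and A: "A = c * prod_list (map \<beta> gs)" "is_unit c"
    and Z: "Z = d * prod_list (map \<epsilon> gs)" "is_unit d"
    and less: "\<forall>g\<in>set gs. \<epsilon> g \<noteq> 0 \<and> degree (\<epsilon> g) < degree (\<beta> g)"
  shows "length gs \<le> min (num_irr_factors A) (num_irr_factors Z)"
proof -
  have "length gs \<le> num_irr_factors A"
    using length_le_num_irr_factors[OF A] less by fastforce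
  moreover have "length gs \<le> num_irr_factors Z"
  proof (cases "\<forall>g\<in>set gs. degree (\<epsilon> g) > 0")
    case True
    then show ?thesis
      using length_le_num_irr_factors[OF Z] by simp
  next
    case False
    then have "length gs \<le> 1"
      using length_le_one_if_degree_drop[OF drop A Z less] by auto
    moreover have "1 \<le> num_irr_factors Z"
      using length_le_num_irr_factors[of Z 1 "[Z]"] degree_pos_if_degree_drop[OF drop] by simp
    ultimately show ?thesis
      by linarith
  qed
  ultimately show ?thesis
    by simp
qed

theorem theorem2:
  fixes f :: "'a::field poly poly" and n :: nat
  assumes n_def: "n = degree f"
    and n2: "n \<ge> 2"
    and a0n: "coeff f 0 * coeff f n \<noteq> 0"
    and nocontent: "\<forall>c :: 'a poly. [:c:] dvd f \<longrightarrow> degree c = 0"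
    and cases:
      "(reducible (coeff f 0) \<and>
        (\<exists>q. irreducible q \<and> q dvd coeff f 0 \<and>
             (\<forall>r. irreducible r \<and> r dvd coeff f 0 \<longrightarrow> degree q \<le> degree r) \<and>
             int (degree (coeff f n)) \<ge> int (degree (coeff f 0)) - int (degree q)) \<and>
        (\<forall>i\<in>{1..n}. degree (coeff f i) < degree (coeff f 0)))
     \<or>
       (reducible (coeff f n) \<and>
        (\<exists>q. irreducible q \<and> q dvd coeff f n \<and>
             (\<forall>r. irreducible r \<and> r dvd coeff f n \<longrightarrow> degree q \<le> degree r) \<and>
             int (degree (coeff f 0)) \<ge> int (degree (coeff f n)) - int (degree q)) \<and>
        (\<forall>i<n. degree (coeff f i) < degree (coeff f n)))"
  shows "product_of_at_most_irr (min (num_irr_factors (coeff f 0)) (num_irr_factors (coeff f n))) f"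
proof -
  have "f \<noteq> 0"
    using a0n by auto
  then obtain gs where gs: "irr_factorization_of f gs"
    using poly_poly_irr_factorization_exists by blast
  then obtain c where c: "is_unit c" and a0: "coeff f 0 = c * prod_list (map (\<lambda>g. coeff g 0) gs)"
    and an: "coeff f n = c * prod_list (map lead_coeff gs)"
    unfolding n_def by (rule coeff_0_lead_coeff_if_irr_factorization)
  have factor: "g dvd f" "degree g \<noteq> 0" "coeff g 0 \<noteq> 0" "lead_coeff g \<noteq> 0" if "g \<in> set gs" for g
    using that gs a0 a0n degree_irreducible_dvd_no_constant_factor[OF _ _ nocontent]
    unfolding irr_factorization_of_def by (auto simp: prod_list_dvd prod_list_zero_iff)
  from cases have "degree_drop_le_least_factor (coeff f 0) (coeff f n) \<and> constant_coeff_dominant f \<or>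
      degree_drop_le_least_factor (coeff f n) (coeff f 0) \<and> lead_coeff_dominant f"
    unfolding degree_drop_le_least_factor_def constant_coeff_dominant_def lead_coeff_dominant_def n_def
    by blast
  then have "length gs \<le> min (num_irr_factors (coeff f 0)) (num_irr_factors (coeff f n))"
  proof (elim disjE conjE)
    assume "degree_drop_le_least_factor (coeff f 0) (coeff f n)" "constant_coeff_dominant f"
    with factor \<open>f \<noteq> 0\<close> show ?thesis
      by (intro length_le_num_irr_factors_if_degree_drop[OF _ a0 c an c])
        (simp_all add: degree_lead_coeff_less_if_dvd_constant_coeff_dominant)
  next
    assume "degree_drop_le_least_factor (coeff f n) (coeff f 0)" "lead_coeff_dominant f"
    with factor \<open>f \<noteq> 0\<close> show ?thesis
      using length_le_num_irr_factors_if_degree_drop[OF _ an c a0 c]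
      by (simp add: degree_coeff_0_less_if_dvd_lead_coeff_dominant min.commute)
  qed
  moreover have "\<not> is_unit f"
    using n_def n2 by (auto simp: is_unit_poly_iff)
  ultimately show ?thesis
    using gs product_of_at_most_irr_if_irr_factorization by blast
qed

end
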